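(* Let $n=2m+1$ with $m\ge1$, let $a,b,c,d\in\mathbb{C}$, and suppose $T_n$ (degree $n$) and $U_{n-2}$ (degree at most $n-2$) satisfy $T_n^2-HU_{n-2}^2=1$ with $$T_n(z)=1-\frac{2(z-d)\prod_{j=1}^{m}(z-x_j)^2}{(a-d)\prod_{j=1}^m(a-x_j)^2}=-1+\frac{2(z-a)(z-b)(z-c)\prod_{j=1}^{m-1}(z-y_j)^2}{(d-a)(d-b)(d-c)\prod_{j=1}^{m-1}(d-y_j)^2}$$ for some $x_1,\dots,x_m,y_1,\dots,y_{m-1}\in\mathbb{C}$. Put $s_k:=\tfrac12\bigl(a^k-b^k-c^k+d^k\bigr)$, $k=1,\dots,2m$, and form $F_k,\mathbf F,\mathbf F_i$ with $\nu=m$, $\mu=m$. Then $\det\mathbf F\ne0$ and $x_1,\dots,x_m$ (with multiplicity) are exactly the zeros of the polynomial $$x^{m}\det\mathbf F+x^{m-1}\det\mathbf F_1+\dots+x\det\mathbf F_{m-1}+\det\mathbf F_{m}.$$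
   Context: $H(z)=(z-a)(z-b)(z-c)(z-d)$. Given complex numbers $s_1,s_2,\dots$, set $F_0:=1$, $F_k:=0$ for $k<0$, and for $k\ge1$, $F_k:=\frac{(-1)^k}{k!}\det M_k$ where $M_k$ is the $k\times k$ matrix with entry $s_{i-j+1}$ for $j\le i$, entry $i$ at position $(i,i+1)$, and $0$ elsewhere. For integers $\nu\ge0,\mu\ge1$, $\mathbf F$ is the $\mu\times\mu$ matrix with $(i,j)$ entry $F_{\nu+i-j}$, and $\mathbf F_i$ ($1\le i\le\mu$) is $\mathbf F$ with its $i$-th column replaced by $(-F_{\nu+1},\dots,-F_{\nu+\mu})^T$. *)

theory Defs
  imports "Jordan_Normal_Form.Determinant" "HOL-Computational_Algebra.Polynomial"
begin

text \<open>The k x k matrix M_k (0-based indices): entry s_(i-j+1) for j <= i (1-based),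
  entry i at position (i,i+1) (1-based), 0 elsewhere.\<close>
definition Mk :: "(nat \<Rightarrow> complex) \<Rightarrow> nat \<Rightarrow> complex mat" where
  "Mk s k = mat k k (\<lambda>(i, j). if j \<le> i then s (i - j + 1)
                              else if j = i + 1 then of_nat (i + 1) else 0)"

definition Fk :: "(nat \<Rightarrow> complex) \<Rightarrow> int \<Rightarrow> complex" where
  "Fk s k = (if k < 0 then 0 else if k = 0 then 1
             else (-1) ^ nat k / fact (nat k) * det (Mk s (nat k)))"

definition Fmat :: "(nat \<Rightarrow> complex) \<Rightarrow> nat \<Rightarrow> nat \<Rightarrow> complex mat" where
  "Fmat s \<nu> \<mu> = mat \<mu> \<mu> (\<lambda>(i, j). Fk s (int \<nu> + int i - int j))"

definition Fmat_col :: "(nat \<Rightarrow> complex) \<Rightarrow> nat \<Rightarrow> nat \<Rightarrow> nat \<Rightarrow> complex mat" where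
  "Fmat_col s \<nu> \<mu> c = mat \<mu> \<mu> (\<lambda>(i, j). if j = c - 1 then - Fk s (int \<nu> + int i + 1)
                                           else Fk s (int \<nu> + int i - int j))"

definition Hpoly :: "complex \<Rightarrow> complex \<Rightarrow> complex \<Rightarrow> complex \<Rightarrow> complex poly" where
  "Hpoly a b c d = [:-a, 1:] * [:-b, 1:] * [:-c, 1:] * [:-d, 1:]"

end

theory Submission
  imports Defs "HOL-Computational_Algebra.Polynomial_FPS"
begin

text \<open>
  By Newton's identities the \<open>F\<^sub>k\<close> are the Taylor coefficients of
  \<open>f(z) = exp(- \<Sum> s\<^sub>k z^k / k) = sqrt((1 - a z)(1 - d z) / ((1 - b z)(1 - c z)))\<close>.
  Adding the two representations of \<open>T\<close> and reflecting \<open>z \<mapsto> 1/z\<close> gives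
  \<open>(1 - d z) Q^2 - (1 - a z)(1 - b z)(1 - c z) Y^2 = e z^(2m+1)\<close> with \<open>e \<noteq> 0\<close>, where \<open>Q\<close> and \<open>Y\<close>
  are the reversed polynomials of \<open>\<Prod>(z - x\<^sub>j)\<close> and \<open>\<Prod>(z - y\<^sub>j)\<close>. Multiplying
  \<open>Q f - (1 - a z) Y\<close> by \<open>(Q f + (1 - a z) Y)(1 - b z)(1 - c z)\<close> shows
  \<open>Q f = (1 - a z) Y + O(z^(2m+1))\<close>: \<open>Q\<close> is the denominator of the \<open>[m/m]\<close> Pade approximant
  of \<open>f\<close>, so its coefficients solve the Toeplitz system with matrix \<open>F\<close> and right-hand side
  \<open>-(F\<^sub>m\<^sub>+\<^sub>1, ..., F\<^sub>2\<^sub>m)\<close>. The same identity makes this Pade denominator unique, so \<open>F\<close> is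
  nonsingular, and Cramer's rule identifies \<open>det F\<^sub>i / det F\<close> with the coefficients of \<open>Q\<close>,
  i.e. those of \<open>\<Prod>(z - x\<^sub>j)\<close> read backwards.
\<close>

definition Mk_last_row :: "(nat \<Rightarrow> complex) \<Rightarrow> (nat \<Rightarrow> complex) \<Rightarrow> nat \<Rightarrow> complex mat" where
  "Mk_last_row s w k = mat k k (\<lambda>(i, j). if i = k - 1 then w j else if j \<le> i then s (i - j + 1)
                                 else if j = i + 1 then of_nat (i + 1) else 0)"

lemma det_Mk_last_row_Suc_Suc:
  "det (Mk_last_row s w (Suc (Suc k)))
     = w (Suc k) * det (Mk s (Suc k)) - of_nat (Suc k) * det (Mk_last_row s w (Suc k))"
proof -
  let ?G = "Mk_last_row s w (Suc (Suc k))"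
  have G: "?G \<in> carrier_mat (Suc (Suc k)) (Suc (Suc k))" by (simp add: Mk_last_row_def)
  have "mat_delete ?G k (Suc k) = Mk_last_row s w (Suc k)"
    by (rule eq_matI) (auto simp: Mk_last_row_def mat_delete_def)
  then have cof_k: "cofactor ?G k (Suc k) = - det (Mk_last_row s w (Suc k))"
    by (simp add: cofactor_def)
  have "mat_delete ?G (Suc k) (Suc k) = Mk s (Suc k)"
    by (rule eq_matI) (auto simp: Mk_last_row_def Mk_def mat_delete_def)
  then have cof_Suc_k: "cofactor ?G (Suc k) (Suc k) = det (Mk s (Suc k))"
    by (simp add: cofactor_def)
  have entries: "?G $$ (k, Suc k) = of_nat (Suc k)" "?G $$ (Suc k, Suc k) = w (Suc k)"
    by (simp_all add: Mk_last_row_def)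
  have "det ?G = (\<Sum>i<Suc (Suc k). ?G $$ (i, Suc k) * cofactor ?G i (Suc k))"
    by (rule laplace_expansion_column[OF G]) simp
  also have "\<dots> = ?G $$ (k, Suc k) * cofactor ?G k (Suc k)
                  + ?G $$ (Suc k, Suc k) * cofactor ?G (Suc k) (Suc k)"
    by (simp add: Mk_last_row_def)
  finally show ?thesis
    by (simp add: cof_k cof_Suc_k entries)
qed

lemma det_Mk: "det (Mk s k) = (-1) ^ k * fact k * Fk s (int k)"
  by (cases "k = 0") (simp add: Fk_def Mk_def det_def, simp add: Fk_def)

lemma det_Mk_last_row:
  "det (Mk_last_row s w (Suc k)) = (-1) ^ k * fact k * (\<Sum>j\<le>k. w j * Fk s (int j))"
proof (induction k)
  case 0
  have "Mk_last_row s w 1 = mat 1 1 (\<lambda>_. w 0)" by (rule eq_matI) (auto simp: Mk_last_row_def)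
  then show ?case by (simp add: det_def Fk_def sign_def)
next
  case (Suc k)
  show ?case
    unfolding det_Mk_last_row_Suc_Suc Suc det_Mk
    by (simp only: sum.atMost_Suc) (simp add: algebra_simps)
qed

lemma Fk_Newton_identity:
  "of_nat (Suc k) * Fk s (int (Suc k)) = - (\<Sum>j\<le>k. s (Suc k - j) * Fk s (int j))"
proof -
  have "Mk s (Suc k) = Mk_last_row s (\<lambda>j. s (Suc k - j)) (Suc k)"
    by (rule eq_matI) (auto simp: Mk_last_row_def Mk_def Suc_diff_le)
  then have "(-1) ^ Suc k * fact (Suc k) * Fk s (int (Suc k))
               = (-1) ^ k * fact k * (\<Sum>j\<le>k. s (Suc k - j) * Fk s (int j))"
    by (simp only: det_Mk_last_row flip: det_Mk)
  then have "(-1) ^ k * fact k * (of_nat (Suc k) * Fk s (int (Suc k))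
               + (\<Sum>j\<le>k. s (Suc k - j) * Fk s (int j))) = (0::complex)"
    by (simp add: algebra_simps) (metis add_eq_0_iff)
  then show ?thesis by (simp add: eq_neg_iff_add_eq_0)
qed

definition fps_Fk :: "(nat \<Rightarrow> complex) \<Rightarrow> complex fps" where
  "fps_Fk s = Abs_fps (\<lambda>k. Fk s (int k))"

lemma fps_Fk_nth [simp]: "fps_nth (fps_Fk s) k = Fk s (int k)"
  by (simp add: fps_Fk_def)

lemma fps_Fk_deriv:
  assumes "s 0 = 0"
  shows "fps_X * fps_deriv (fps_Fk s) = - (fps_Fk s * Abs_fps s)"
proof (rule fps_ext)
  fix k
  show "fps_nth (fps_X * fps_deriv (fps_Fk s)) k = fps_nth (- (fps_Fk s * Abs_fps s)) k"
  proof (cases k)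
    case (Suc k')
    have "fps_nth (fps_X * fps_deriv (fps_Fk s)) k = of_nat (Suc k') * Fk s (int (Suc k'))"
      using Suc by (simp only: fps_X_mult_nth fps_deriv_nth fps_Fk_nth) simp
    also have "\<dots> = - (\<Sum>i\<le>k'. Fk s (int i) * s (Suc k' - i))"
      unfolding Fk_Newton_identity by (simp add: mult.commute)
    also have "(\<Sum>i\<le>k'. Fk s (int i) * s (Suc k' - i))
                 = (\<Sum>i = 0..Suc k'. Fk s (int i) * s (Suc k' - i))"
      using assms by (simp add: atLeast0AtMost)
    also have "- \<dots> = fps_nth (- (fps_Fk s * Abs_fps s)) k"
      using Suc by (simp only: fps_neg_nth fps_mult_nth fps_Fk_nth fps_nth_Abs_fps)
    finally show ?thesis .
  qed (simp add: fps_X_mult_nth fps_mult_nth assms)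
qed

lemma fps_eq_if_log_deriv_eq:
  fixes u v :: "'a::field_char_0 fps"
  assumes "fps_deriv u * v = fps_deriv v * u" and "fps_nth v 0 \<noteq> 0" and "fps_nth u 0 = fps_nth v 0"
  shows "u = v"
proof -
  define w where "w = u * inverse v"
  have inv: "inverse v * v = 1" using inverse_mult_eq_1[OF assms(2)] .
  then have "fps_deriv u * inverse v = fps_deriv u * v * (inverse v) ^ 2"
    by (simp add: power2_eq_square algebra_simps)
  then have "fps_deriv w = (fps_deriv u * v - fps_deriv v * u) * (inverse v) ^ 2"
    by (simp add: w_def fps_inverse_deriv[OF assms(2)] algebra_simps)
  then have "fps_deriv w = 0" using assms(1) by simp
  then have "w = fps_const (fps_nth w 0)" using fps_deriv_eq_0_iff by blast
  moreover have "fps_nth w 0 = 1" using assms(2,3) by (simp add: w_def)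
  ultimately have "u * inverse v * v = v" by (simp add: w_def)
  then show ?thesis using inv by (simp add: mult.assoc)
qed

definition lin_fps :: "'a::comm_ring_1 \<Rightarrow> 'a fps" where
  "lin_fps a = 1 - fps_const a * fps_X"

lemma lin_fps_mult_geometric: "lin_fps a * Abs_fps (\<lambda>k. a ^ k) = 1"
proof (rule fps_ext)
  fix k show "fps_nth (lin_fps a * Abs_fps (\<lambda>k. a ^ k)) k = fps_nth 1 k"
    by (cases k) (simp_all add: lin_fps_def algebra_simps fps_X_mult_nth mult.assoc)
qed

lemma fps_Fk_squared:
  assumes s: "\<And>k. s k = (a ^ k - b ^ k - c ^ k + d ^ k) / 2"
  shows "fps_Fk s ^ 2 * lin_fps b * lin_fps c = lin_fps a * lin_fps d"
proof (rule fps_eq_if_log_deriv_eq)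
  let ?f = "fps_Fk s" and ?S = "Abs_fps s" and ?G = "\<lambda>z. Abs_fps (\<lambda>k. z ^ k)"
  let ?A = "lin_fps a" and ?B = "lin_fps b" and ?C = "lin_fps c" and ?D = "lin_fps d"
  have ode: "fps_X * fps_deriv ?f = - (?f * ?S)" using fps_Fk_deriv s[of 0] by simp
  have X_deriv: "fps_X * fps_deriv (lin_fps z) = lin_fps z - 1" for z :: complex
    by (simp add: lin_fps_def)
  have "fps_const 2 * ?S = ?G a - ?G b - ?G c + ?G d"
    by (rule fps_ext) (simp add: s)
  then have S2: "2 * ?S = ?G a - ?G b - ?G c + ?G d"
    by (metis numeral_fps_const)
  have "2 * ?S * (?A * ?B * ?C * ?D) = (?A * ?G a) * (?B * ?C * ?D) - (?B * ?G b) * (?A * ?C * ?D)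
      - (?C * ?G c) * (?A * ?B * ?D) + (?D * ?G d) * (?A * ?B * ?C)"
    unfolding S2 by (simp add: algebra_simps)
  then have S: "2 * ?S * (?A * ?B * ?C * ?D) = ?B * ?C * ?D - ?A * ?C * ?D - ?A * ?B * ?D + ?A * ?B * ?C"
    by (simp add: lin_fps_mult_geometric)
  have X_deriv_square: "fps_X * fps_deriv (?f ^ 2 * ?B * ?C)
      = 2 * ?f * (fps_X * fps_deriv ?f) * ?B * ?C
        + ?f ^ 2 * (fps_X * fps_deriv ?B * ?C + ?B * (fps_X * fps_deriv ?C))"
    by (simp add: fps_deriv_power algebra_simps power2_eq_square)
  have "fps_X * fps_deriv (?f ^ 2 * ?B * ?C) * (?A * ?D)
      = ?f ^ 2 * ((fps_X * fps_deriv ?B * ?C + ?B * (fps_X * fps_deriv ?C)) * ?A * ?D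
                  - 2 * ?S * (?A * ?B * ?C * ?D))"
    unfolding X_deriv_square ode by (simp add: algebra_simps power2_eq_square)
  also have "\<dots> = ?f ^ 2 * (((?B - 1) * ?C + ?B * (?C - 1)) * ?A * ?D
                  - (?B * ?C * ?D - ?A * ?C * ?D - ?A * ?B * ?D + ?A * ?B * ?C))"
    unfolding S X_deriv ..
  also have "\<dots> = ((?A - 1) * ?D + ?A * (?D - 1)) * (?f ^ 2 * ?B * ?C)"
    by (simp add: algebra_simps)
  also have "\<dots> = fps_X * fps_deriv (?A * ?D) * (?f ^ 2 * ?B * ?C)"
    by (simp add: algebra_simps flip: X_deriv)
  finally show "fps_deriv (?f ^ 2 * ?B * ?C) * (?A * ?D) = fps_deriv (?A * ?D) * (?f ^ 2 * ?B * ?C)"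
    by (simp add: mult.assoc)
qed (simp_all add: lin_fps_def Fk_def power2_eq_square)

lemma fps_nth_eq_0_if_mult_eq_X_power:
  fixes E W H :: "'a::field fps"
  assumes "E * W = fps_X ^ N * H" and "fps_nth W 0 \<noteq> 0" and "k < N"
  shows "fps_nth E k = 0"
proof -
  have "E = E * W * inverse W"
    using inverse_mult_eq_1[OF assms(2)] by (simp add: mult.assoc mult.commute)
  also have "\<dots> = fps_X ^ N * (H * inverse W)"
    using assms(1) by (simp add: mult.assoc)
  finally show ?thesis using assms(3) by (simp add: fps_X_power_mult_nth)
qed

lemma fps_nth_mult_eq_0:
  fixes g h :: "'a::comm_semiring_0 fps"
  assumes "\<And>i. i < N \<Longrightarrow> fps_nth h i = 0" and "k < N"
  shows "fps_nth (g * h) k = 0"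
  using assms by (auto simp: fps_mult_nth intro!: sum.neutral)

definition lin_poly :: "'a::comm_ring_1 \<Rightarrow> 'a poly" where
  "lin_poly a = [:1, -a:]"

lemma degree_lin_poly: "degree (lin_poly a) \<le> 1"
  by (simp add: lin_poly_def)

lemma fps_of_poly_lin_poly: "fps_of_poly (lin_poly a) = lin_fps (a::'a::field)"
  by (simp add: lin_poly_def lin_fps_def fps_of_poly_linear')

locale sqrt_pade =
  fixes m N :: nat and a b c d e :: "'a::field_char_0" and f :: "'a fps" and Q Y :: "'a poly"
  assumes N_def: "N = 2 * m + 1" and m_pos: "m \<ge> 1"
    and degree_Q: "degree Q \<le> m" and degree_Y: "degree Y \<le> m - 1"
    and coeff_Q_0: "coeff Q 0 = 1" and coeff_Y_0: "coeff Y 0 = 1"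
    and e_nonzero: "e \<noteq> 0"
    and identity: "lin_poly d * Q ^ 2 - lin_poly a * lin_poly b * lin_poly c * Y ^ 2 = monom e N"
    and f_squared: "f ^ 2 * lin_fps b * lin_fps c = lin_fps a * lin_fps d"
    and f_0: "fps_nth f 0 = 1"
begin

abbreviation P :: "'a poly" where "P \<equiv> lin_poly a * Y"

lemma degree_P: "degree P \<le> m"
  using degree_mult_le[of "lin_poly a" Y] degree_lin_poly[of a] degree_Y m_pos by linarith

lemma remainder_coeffs_eq_0:
  assumes "k < N"
  shows "fps_nth (fps_of_poly Q * f - fps_of_poly P) k = 0"
proof (rule fps_nth_eq_0_if_mult_eq_X_power)
  let ?Q = "fps_of_poly Q" and ?Y = "fps_of_poly Y"
  let ?A = "lin_fps a" and ?B = "lin_fps b" and ?C = "lin_fps c" and ?D = "lin_fps d"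
  have "(?Q * f - ?A * ?Y) * ((?Q * f + ?A * ?Y) * ?B * ?C)
      = ?Q ^ 2 * (f ^ 2 * ?B * ?C) - ?A ^ 2 * ?Y ^ 2 * ?B * ?C"
    by (simp add: algebra_simps power2_eq_square)
  also have "\<dots> = ?A * (?D * ?Q ^ 2 - ?A * ?B * ?C * ?Y ^ 2)"
    unfolding f_squared by (simp add: algebra_simps power2_eq_square)
  also have "?D * ?Q ^ 2 - ?A * ?B * ?C * ?Y ^ 2 = fps_of_poly (monom e N)"
    unfolding identity[symmetric]
    by (simp add: fps_of_poly_diff fps_of_poly_mult fps_of_poly_power fps_of_poly_lin_poly)
  finally show "(?Q * f - fps_of_poly P) * ((?Q * f + ?A * ?Y) * ?B * ?C)
      = fps_X ^ N * (fps_const e * ?A)"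
    by (simp add: fps_of_poly_mult fps_of_poly_lin_poly fps_of_poly_monom mult_ac)
  show "fps_nth ((?Q * f + ?A * ?Y) * ?B * ?C) 0 \<noteq> 0"
    by (simp add: coeff_Q_0 coeff_Y_0 f_0 lin_fps_def)
qed (fact assms)

lemma pade_coeffs_eq_0:
  assumes "i < m"
  shows "fps_nth (fps_of_poly Q * f) (m + i + 1) = 0"
proof -
  have "coeff P (m + i + 1) = 0" using degree_P by (intro coeff_eq_0) simp
  then show ?thesis
    using remainder_coeffs_eq_0[of "m + i + 1"] assms N_def by simp
qed

text \<open>
  \<open>R\<close> is chosen so that \<open>Q R = e z\<^sup>N Q'\<close>. As \<open>Q(0) = 1\<close>, \<open>R = O(z\<^sup>N)\<close>; with \<open>deg R \<le> N\<close> this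
  leaves \<open>R = r z\<^sup>N\<close>, and comparing the coefficients of \<open>z\<^sup>N\<close> gives \<open>r = e Q'(0) = 0\<close>.
\<close>

lemma cross_product_eq_imp_0:
  assumes "degree Q' \<le> m" and "degree P' \<le> m" and "coeff Q' 0 = 0" and "Q * P' = Q' * P"
  shows "Q' = 0"
proof -
  define R where "R = lin_poly d * Q * Q' - lin_poly b * lin_poly c * Y * P'"
  have QR: "Q * R = Q' * monom e N"
  proof -
    have "Q * R = lin_poly d * Q ^ 2 * Q' - lin_poly b * lin_poly c * Y * (Q * P')"
      by (simp add: R_def algebra_simps power2_eq_square)
    also have "\<dots> = Q' * (lin_poly d * Q ^ 2 - lin_poly a * lin_poly b * lin_poly c * Y ^ 2)"
      unfolding assms(4) by (simp add: algebra_simps power2_eq_square)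
    finally show ?thesis unfolding identity .
  qed
  have R_low: "coeff R k = 0" if "k < N" for k
  proof -
    have "fps_of_poly R * fps_of_poly Q = fps_X ^ N * (fps_const e * fps_of_poly Q')"
      using arg_cong[OF QR, of fps_of_poly]
      by (simp add: fps_of_poly_mult fps_of_poly_monom algebra_simps)
    from fps_nth_eq_0_if_mult_eq_X_power[OF this _ that] coeff_Q_0 show ?thesis by simp
  qed
  have "degree R \<le> N"
  proof -
    have "degree (lin_poly d * Q * Q') \<le> N"
      using degree_mult_le[of "lin_poly d * Q" Q'] degree_mult_le[of "lin_poly d" Q]
        degree_lin_poly[of d] degree_Q assms(1) N_def by linarith
    moreover have "degree (lin_poly b * lin_poly c * Y * P') \<le> N"
      using degree_mult_le[of "lin_poly b * lin_poly c * Y" P']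
        degree_mult_le[of "lin_poly b * lin_poly c" Y] degree_mult_le[of "lin_poly b" "lin_poly c"]
        degree_lin_poly[of b] degree_lin_poly[of c]
        degree_Y assms(2) N_def m_pos by linarith
    ultimately show ?thesis unfolding R_def using degree_diff_le by blast
  qed
  then have "coeff R k = coeff (monom (coeff R N) N) k" for k
    using R_low[of k] by (cases "k < N"; cases "k = N") (simp_all add: coeff_monom coeff_eq_0)
  then have R: "R = monom (coeff R N) N"
    by (rule poly_eqI)
  have "coeff R N = coeff (Q * R) N"
    by (subst R, subst mult.commute) (simp add: coeff_monom_mult coeff_Q_0)
  also have "\<dots> = 0"
    unfolding QR by (subst mult.commute) (simp add: coeff_monom_mult assms(3))
  finally have "Q' * monom e N = 0" using QR R by simp
  then show ?thesis using e_nonzero by simp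
qed

lemma pade_unique:
  assumes "degree Q' \<le> m" and "coeff Q' 0 = 0"
    and "\<And>i. i < m \<Longrightarrow> fps_nth (fps_of_poly Q' * f) (m + i + 1) = 0"
  shows "Q' = 0"
proof (rule cross_product_eq_imp_0)
  define P' where "P' = truncate_fps (Suc m) (fps_of_poly Q' * f)"
  show "degree P' \<le> m"
    using degree_truncate_fps[of "Suc m"] by (simp add: P'_def less_Suc_eq_le)
  have remainder'_coeffs_eq_0: "fps_nth (fps_of_poly Q' * f - fps_of_poly P') k = 0" if "k < N" for k
    using assms(3)[of "k - Suc m"] that N_def
    by (cases "k \<le> m") (simp_all add: P'_def coeff_truncate_fps)
  have "fps_of_poly (Q * P' - Q' * P)
      = fps_of_poly Q' * (fps_of_poly Q * f - fps_of_poly P)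
        - fps_of_poly Q * (fps_of_poly Q' * f - fps_of_poly P')"
    by (simp add: fps_of_poly_diff fps_of_poly_mult algebra_simps)
  then have low: "coeff (Q * P' - Q' * P) k = 0" if "k < N" for k
    using fps_nth_mult_eq_0[OF remainder_coeffs_eq_0 that, of "fps_of_poly Q'"]
      fps_nth_mult_eq_0[OF remainder'_coeffs_eq_0 that, of "fps_of_poly Q"]
    by (metis fps_of_poly_nth fps_sub_nth diff_self)
  have "degree (Q * P') \<le> 2 * m" "degree (Q' * P) \<le> 2 * m"
    using degree_mult_le[of Q P'] degree_mult_le[of Q' P] degree_Q \<open>degree P' \<le> m\<close> assms(1) degree_P
    by linarith+
  then have degree_diff: "degree (Q * P' - Q' * P) \<le> 2 * m"
    by (meson degree_diff_le max.boundedI order_trans)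
  have "coeff (Q * P' - Q' * P) k = 0" for k
  proof (cases "k < N")
    case False
    with degree_diff N_def show ?thesis by (intro coeff_eq_0) simp
  qed (rule low)
  then show "Q * P' = Q' * P"
    using poly_eqI[of "Q * P' - Q' * P" 0] by simp
qed (fact assms)+

end

lemma Fmat_mult_coeffs:
  assumes "degree p \<le> \<mu>" and "i < \<mu>"
  shows "(Fmat s \<nu> \<mu> *\<^sub>v vec \<mu> (\<lambda>j. coeff p (Suc j))) $ i
           = fps_nth (fps_of_poly p * fps_Fk s) (\<nu> + i + 1) - coeff p 0 * Fk s (int \<nu> + int i + 1)"
proof -
  let ?n = "\<nu> + i + \<mu>"
  have "(Fmat s \<nu> \<mu> *\<^sub>v vec \<mu> (\<lambda>j. coeff p (Suc j))) $ i
          = (\<Sum>j<\<mu>. Fk s (int \<nu> + int i - int j) * coeff p (Suc j))"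
    using assms(2) by (simp add: Fmat_def scalar_prod_def atLeast0LessThan)
  also have "\<dots> = (\<Sum>j\<le>?n. Fk s (int \<nu> + int i - int j) * coeff p (Suc j))"
    using assms(1) by (intro sum.mono_neutral_left) (auto simp: coeff_eq_0)
  \<comment> \<open>the terms with \<open>j > \<nu> + i\<close> vanish because \<open>F\<^sub>k = 0\<close> for \<open>k < 0\<close>\<close>
  also have "\<dots> = (\<Sum>j\<le>\<nu> + i. coeff p (Suc j) * Fk s (int (\<nu> + i - j)))"
    by (rule sum.mono_neutral_cong_right) (auto simp: Fk_def of_nat_diff)
  also have "\<dots> = (\<Sum>j\<le>\<nu> + i + 1. coeff p j * Fk s (int (\<nu> + i + 1 - j)))
                  - coeff p 0 * Fk s (int \<nu> + int i + 1)"
    by (simp add: sum.atMost_Suc_shift ac_simps del: sum.atMost_Suc)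
  also have "(\<Sum>j\<le>\<nu> + i + 1. coeff p j * Fk s (int (\<nu> + i + 1 - j)))
               = fps_nth (fps_of_poly p * fps_Fk s) (\<nu> + i + 1)"
    by (simp add: fps_mult_nth atLeast0AtMost)
  finally show ?thesis .
qed

definition shifted_poly_of_vec :: "'a::comm_ring_1 vec \<Rightarrow> 'a poly" where
  "shifted_poly_of_vec v = (\<Sum>j<dim_vec v. monom (v $ j) (Suc j))"

lemma coeff_shifted_poly_of_vec:
  "coeff (shifted_poly_of_vec v) k = (if 1 \<le> k \<and> k \<le> dim_vec v then v $ (k - 1) else 0)"
proof (cases "1 \<le> k \<and> k \<le> dim_vec v")
  case True
  have "coeff (shifted_poly_of_vec v) k = (\<Sum>j<dim_vec v. if j = k - 1 then v $ j else 0)"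
    unfolding shifted_poly_of_vec_def coeff_sum coeff_monom using True by (intro sum.cong) auto
  also have "\<dots> = v $ (k - 1)" using True by (subst sum.delta) auto
  finally show ?thesis using True by simp
next
  case False
  then show ?thesis
    unfolding shifted_poly_of_vec_def coeff_sum coeff_monom by (intro trans[OF sum.neutral]) auto
qed

lemma det_Fmat_neq_0:
  assumes "\<And>p. degree p \<le> \<mu> \<Longrightarrow> coeff p 0 = 0 \<Longrightarrow>
             (\<And>i. i < \<mu> \<Longrightarrow> fps_nth (fps_of_poly p * fps_Fk s) (\<nu> + i + 1) = 0) \<Longrightarrow> p = 0"
  shows "det (Fmat s \<nu> \<mu>) \<noteq> 0"
proof
  have F: "Fmat s \<nu> \<mu> \<in> carrier_mat \<mu> \<mu>" by (simp add: Fmat_def)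
  assume "det (Fmat s \<nu> \<mu>) = 0"
  then obtain v where v: "v \<in> carrier_vec \<mu>" "v \<noteq> 0\<^sub>v \<mu>" "Fmat s \<nu> \<mu> *\<^sub>v v = 0\<^sub>v \<mu>"
    using det_0_iff_vec_prod_zero[OF F] by blast
  define p where "p = shifted_poly_of_vec v"
  have coeff_p: "coeff p k = (if 1 \<le> k \<and> k \<le> \<mu> then v $ (k - 1) else 0)" for k
    using v(1) by (simp add: p_def coeff_shifted_poly_of_vec)
  have degree_p: "degree p \<le> \<mu>" by (rule degree_le) (simp add: coeff_p)
  have v_eq: "vec \<mu> (\<lambda>j. coeff p (Suc j)) = v"
    using v(1) by (intro eq_vecI) (simp_all add: coeff_p)
  have "fps_nth (fps_of_poly p * fps_Fk s) (\<nu> + i + 1) = 0" if "i < \<mu>" for i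
    using Fmat_mult_coeffs[OF degree_p that, of s \<nu>, unfolded v_eq] v(3) that by (simp add: coeff_p)
  then have "p = 0" using assms degree_p coeff_p by simp
  then have "v $ j = 0" if "j < \<mu>" for j
    using coeff_p[of "Suc j"] that by simp
  then show False using v(1,2) by (metis eq_vecI carrier_vecD index_zero_vec)
qed

lemma det_Fmat_col:
  assumes "degree p \<le> \<mu>" and "coeff p 0 = 1"
    and "\<And>i. i < \<mu> \<Longrightarrow> fps_nth (fps_of_poly p * fps_Fk s) (\<nu> + i + 1) = 0"
    and "i \<in> {1..\<mu>}"
  shows "det (Fmat_col s \<nu> \<mu> i) = coeff p i * det (Fmat s \<nu> \<mu>)"
proof -
  define q where "q = vec \<mu> (\<lambda>j. coeff p (Suc j))"
  define r where "r = vec \<mu> (\<lambda>i. - Fk s (int \<nu> + int i + 1))"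
  have F: "Fmat s \<nu> \<mu> \<in> carrier_mat \<mu> \<mu>" by (simp add: Fmat_def)
  have "(Fmat s \<nu> \<mu> *\<^sub>v q) $ j = r $ j" if "j < \<mu>" for j
    using Fmat_mult_coeffs[OF assms(1) that, of s \<nu>] assms(2) assms(3)[OF that] that
    by (simp add: q_def r_def)
  then have "Fmat s \<nu> \<mu> *\<^sub>v q = r"
    using F by (intro eq_vecI) (simp_all add: r_def)
  moreover have "Fmat_col s \<nu> \<mu> i = replace_col (Fmat s \<nu> \<mu>) r (i - 1)"
    by (intro eq_matI) (auto simp: Fmat_col_def Fmat_def replace_col_def r_def)
  ultimately show ?thesis
    using cramer_lemma_mat[OF F, of q "i - 1"] assms(4) by (auto simp: q_def)
qed

lemma reflect_poly_add_eq_monom: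
  assumes "p + q = [:k:]" and "degree p = N" and "degree q = N"
  shows "reflect_poly p + reflect_poly q = monom k N"
proof (rule poly_eqI)
  fix i
  have "coeff p (N - i) + coeff q (N - i) = coeff [:k:] (N - i)"
    by (simp only: assms(1) flip: coeff_add)
  then show "coeff (reflect_poly p + reflect_poly q) i = coeff (monom k N) i"
    using assms(2,3) by (auto simp: coeff_reflect_poly coeff_monom coeff_pCons split: nat.split)
qed

lemma reflect_poly_lin: "reflect_poly [:-a, 1:] = lin_poly a"
  by (simp add: lin_poly_def reflect_poly_def)

lemma smult_add_smult_eq_const_imp:
  fixes p q :: "'a::field poly"
  assumes "smult c1 p + smult c2 q = [:k:]" and "c1 \<noteq> 0"
    and "degree p = N" "lead_coeff p = 1" and "degree q = N" "lead_coeff q = 1" and "N > 0"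
  shows "c2 = - c1"
proof -
  have "c2 \<noteq> 0"
  proof
    assume "c2 = 0"
    then have "degree (smult c1 p) = 0" using assms(1) by simp
    then show False using assms(2,3,7) by simp
  qed
  then have "c1 + c2 = coeff (smult c1 p + smult c2 q) N"
    using assms(2-6) by simp
  also have "\<dots> = 0"
    using assms(1,7) by (simp add: coeff_pCons split: nat.split)
  finally show ?thesis by (simp add: eq_neg_iff_add_eq_0 add.commute)
qed

lemma reflected_identity:
  fixes X Y :: "'a::field_char_0 poly"
  assumes sum: "smult c1 ([:-d, 1:] * X ^ 2) + smult c2 ([:-a, 1:] * [:-b, 1:] * [:-c, 1:] * Y ^ 2) = 2"
    and "c1 \<noteq> 0" and "m \<ge> 1"
    and X: "degree X = m" "lead_coeff X = 1" and Y: "degree Y = m - 1" "lead_coeff Y = 1"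
  shows "lin_poly d * reflect_poly X ^ 2 - lin_poly a * lin_poly b * lin_poly c * reflect_poly Y ^ 2
           = monom (2 / c1) (2 * m + 1)"
proof -
  let ?A = "[:-d, 1:] * X ^ 2" and ?B = "[:-a, 1:] * [:-b, 1:] * [:-c, 1:] * Y ^ 2"
  note sum' = sum[unfolded numeral_poly]
  have "X \<noteq> 0" "Y \<noteq> 0" using X Y by auto
  have A: "degree ?A = 2 * m + 1" "lead_coeff ?A = 1"
    using \<open>X \<noteq> 0\<close> X
    by (simp add: degree_mult_eq degree_power_eq del: mult_pCons_left)
      (simp only: lead_coeff_mult lead_coeff_power X(2), simp)
  have B: "degree ?B = 2 * m + 1" "lead_coeff ?B = 1"
    using \<open>Y \<noteq> 0\<close> Y \<open>m \<ge> 1\<close>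
    by (simp add: degree_mult_eq degree_power_eq del: mult_pCons_left)
      (simp only: lead_coeff_mult lead_coeff_power Y(2), simp)
  have "c2 = - c1"
    using smult_add_smult_eq_const_imp[OF sum' \<open>c1 \<noteq> 0\<close> A B] by simp
  then have "reflect_poly (smult c1 ?A) + reflect_poly (smult c2 ?B) = monom 2 (2 * m + 1)"
    using \<open>c1 \<noteq> 0\<close> A(1) B(1)
    by (intro reflect_poly_add_eq_monom[OF sum'])
      (simp_all only: degree_smult_eq neg_equal_0_iff_equal if_False)
  then have reflected: "smult c1 (lin_poly d * reflect_poly X ^ 2
                                  - lin_poly a * lin_poly b * lin_poly c * reflect_poly Y ^ 2)
                        = monom 2 (2 * m + 1)" (is "smult c1 ?R = _")
    by (simp only: reflect_poly_smult reflect_poly_mult reflect_poly_power reflect_poly_lin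
        \<open>c2 = - c1\<close>) (simp add: smult_diff_right)
  have "?R = smult (inverse c1) (smult c1 ?R)"
    using \<open>c1 \<noteq> 0\<close> by simp
  also have "\<dots> = monom (2 / c1) (2 * m + 1)"
    unfolding reflected by (simp add: smult_monom field_simps)
  finally show ?thesis .
qed

lemma order_prod_linear_factors:
  fixes x :: "'b \<Rightarrow> 'a::idom"
  assumes "finite A"
  shows "order z (\<Prod>j\<in>A. [:-x j, 1:]) = card {j \<in> A. x j = z}"
  using assms
proof (induction A rule: finite_induct)
  case (insert j A)
  have "[:-x j, 1:] * (\<Prod>j\<in>A. [:-x j, 1:]) \<noteq> 0"
    using insert.hyps(1) by (simp add: prod_zero_iff del: mult_pCons_left)
  then have "order z (\<Prod>j\<in>insert j A. [:-x j, 1:])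
               = order z [:-x j, 1:] + order z (\<Prod>j\<in>A. [:-x j, 1:])"
    using insert.hyps by (simp add: order_mult del: mult_pCons_left)
  moreover have "order z [:-x j, 1:] = (if x j = z then 1 else 0)"
    using order_power_n_n[of z 1] by (auto intro: order_0I)
  moreover have "{i \<in> insert j A. x i = z}
                  = (if x j = z then insert j {i \<in> A. x i = z} else {i \<in> A. x i = z})"
    by auto
  then have "card {i \<in> insert j A. x i = z} = (if x j = z then 1 else 0) + card {i \<in> A. x i = z}"
    using insert.hyps by auto
  ultimately show ?case
    using insert.IH by simp
qed (simp add: order_0I)

lemma monic_prod_linear_factors:
  fixes x :: "'b \<Rightarrow> 'a::idom"
  assumes "finite A"
  shows "degree (\<Prod>j\<in>A. [:-x j, 1:]) = card A" and "lead_coeff (\<Prod>j\<in>A. [:-x j, 1:]) = 1"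
proof -
  show "degree (\<Prod>j\<in>A. [:-x j, 1:]) = card A"
    using assms by (simp add: degree_prod_sum_eq)
  show "lead_coeff (\<Prod>j\<in>A. [:-x j, 1:]) = 1"
    by (simp add: lead_coeff_prod)
qed

lemma monom_add_sum_reflect_coeffs:
  fixes p :: "'a::comm_ring_1 poly"
  assumes "degree p = m" and "lead_coeff p = 1"
  shows "monom c m + (\<Sum>i=1..m. monom (c * coeff (reflect_poly p) i) (m - i)) = smult c p"
proof -
  have smult_eq: "smult c q = [:c:] * q" for q by simp
  have p_eq: "p = (\<Sum>k<m. monom (coeff p k) k) + monom 1 m"
    using poly_as_sum_of_monoms[of p] assms by (simp add: lessThan_Suc_atMost[symmetric])
  have "(\<Sum>i=1..m. monom (c * coeff (reflect_poly p) i) (m - i))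
          = (\<Sum>k<m. monom (c * coeff p k) k)"
    using assms(1) by (intro sum.reindex_bij_witness[of _ "\<lambda>k. m - k" "\<lambda>i. m - i"])
      (auto simp: coeff_reflect_poly)
  also have "\<dots> = smult c (\<Sum>k<m. monom (coeff p k) k)"
    unfolding smult_eq sum_distrib_left by (simp add: smult_monom)
  also have "monom c m + \<dots> = smult c ((\<Sum>k<m. monom (coeff p k) k) + monom 1 m)"
    by (simp add: smult_add_right smult_monom add.commute)
  finally show ?thesis using p_eq by simp
qed

theorem theorem1:
  fixes m n :: nat and a b c d :: complex and T U :: "complex poly"
    and x y :: "nat \<Rightarrow> complex" and s :: "nat \<Rightarrow> complex"
  assumes "m \<ge> 1" and "n = 2 * m + 1"
    and "degree T = n" and "degree U \<le> n - 2"
    and "T ^ 2 - Hpoly a b c d * U ^ 2 = 1"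
    and "T = 1 - smult (2 / ((a - d) * (\<Prod>j=1..m. (a - x j) ^ 2)))
                  ([:-d, 1:] * (\<Prod>j=1..m. [:-x j, 1:] ^ 2))"
    and "T = -1 + smult (2 / ((d - a) * (d - b) * (d - c) * (\<Prod>j=1..m-1. (d - y j) ^ 2)))
                  ([:-a, 1:] * [:-b, 1:] * [:-c, 1:] * (\<Prod>j=1..m-1. [:-y j, 1:] ^ 2))"
    and "\<And>k. s k = (a ^ k - b ^ k - c ^ k + d ^ k) / 2"
  shows "det (Fmat s m m) \<noteq> 0 \<and>
         (\<forall>z. order z (monom (det (Fmat s m m)) m
                        + (\<Sum>i=1..m. monom (det (Fmat_col s m m i)) (m - i)))
              = card {j \<in> {1..m}. x j = z})"
proof -
  define X where "X = (\<Prod>j=1..m. [:-x j, 1:])"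
  define Y where "Y = (\<Prod>j=1..m-1. [:-y j, 1:])"
  define c1 where "c1 = 2 / ((a - d) * (\<Prod>j=1..m. (a - x j) ^ 2))"
  define c2 where "c2 = 2 / ((d - a) * (d - b) * (d - c) * (\<Prod>j=1..m-1. (d - y j) ^ 2))"
  have T1: "T = 1 - smult c1 ([:-d, 1:] * X ^ 2)"
    and T2: "T = -1 + smult c2 ([:-a, 1:] * [:-b, 1:] * [:-c, 1:] * Y ^ 2)"
    using assms(6,7) by (simp_all add: c1_def c2_def X_def Y_def prod_power_distrib)
  have X: "degree X = m" "lead_coeff X = 1" and Y: "degree Y = m - 1" "lead_coeff Y = 1"
    using monic_prod_linear_factors[of "{1..m}" x] monic_prod_linear_factors[of "{1..m-1}" y]
    by (simp_all add: X_def Y_def)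
  have "c1 \<noteq> 0"
    using T1 assms(2,3) by auto
  have "p + q = 2" if "T = 1 - p" "T = -1 + q" for p q :: "complex poly"
    using that by (simp add: algebra_simps)
  from this[OF T1 T2] have reflected:
    "lin_poly d * reflect_poly X ^ 2 - lin_poly a * lin_poly b * lin_poly c * reflect_poly Y ^ 2
       = monom (2 / c1) (2 * m + 1)"
    using \<open>c1 \<noteq> 0\<close> assms(1) X Y by (rule reflected_identity)
  interpret sqrt_pade m "2 * m + 1" a b c d "2 / c1" "fps_Fk s" "reflect_poly X" "reflect_poly Y"
    using assms(1) X Y \<open>c1 \<noteq> 0\<close> reflected fps_Fk_squared[OF assms(8)]
    by unfold_locales (auto simp: Fk_def intro: order_trans[OF degree_reflect_poly_le])
  define \<Delta> where "\<Delta> = det (Fmat s m m)"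
  have "\<Delta> \<noteq> 0"
    unfolding \<Delta>_def using pade_unique by (rule det_Fmat_neq_0)
  have "(\<Sum>i=1..m. monom (det (Fmat_col s m m i)) (m - i))
          = (\<Sum>i=1..m. monom (\<Delta> * coeff (reflect_poly X) i) (m - i))"
    using det_Fmat_col[OF degree_Q coeff_Q_0 pade_coeffs_eq_0]
    by (intro sum.cong) (simp_all add: \<Delta>_def mult.commute)
  then have "monom \<Delta> m + (\<Sum>i=1..m. monom (det (Fmat_col s m m i)) (m - i)) = smult \<Delta> X"
    using monom_add_sum_reflect_coeffs[OF X] by simp
  then show ?thesis
    using \<open>\<Delta> \<noteq> 0\<close> by (simp add: \<Delta>_def order_smult X_def order_prod_linear_factors)
qed

end
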